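(* Let $(\mathcal{X},\kappa)$ and $(\mathcal{Y},\lambda)$ be finite similarity spaces with Gram matrices $\mathbf{K}$ and $\mathbf{\Lambda}$, and let $(X,Y)$ be a random pair with values in $\mathcal{X}\times\mathcal{Y}$. Then $$\mathbb{H}^{\mathbf{K}}[X]=\mathbb{H}^{\mathbf{K}\otimes\mathbf{J}}[X,Y]\le\mathbb{H}^{\mathbf{K}\otimes\mathbf{\Lambda}}[X,Y]\le\mathbb{H}^{\mathbf{K}\otimes\mathbf{I}}[X,Y]=\mathbb{H}^{\mathbf{I}}[Y]+\mathbb{H}^{\mathbf{K},\mathbf{I}}[X\mid Y].$$
   Context: A finite similarity space $(\mathcal{X},\kappa)$ is a finite set with a symmetric $\kappa:\mathcal{X}\times\mathcal{X}\to[0,1]$ with $\kappa(x,x)=1$; its Gram matrix is $\mathbf{K}_{x,y}=\kappa(x,y)$. For a distribution $\mathbb{P}$ on $\mathcal{X}$, $(\mathbf{K}\mathbb{P})(x)=\sum_y\kappa(x,y)\mathbb{P}(y)$ and the GAIT entropy is $\mathbb{H}^{\mathbf{K}}[\mathbb{P}]=-\sum_x\mathbb{P}(x)\log(\mathbf{K}\mathbb{P})(x)$ (with $0\log0=0$); $\mathbb{H}^{\mathbf{K}}[X]$ is the GAIT entropy of the law of $X$. On $\mathcal{Y}$, $\mathbf{J}$ denotes the all-ones kernel ($\lambda\equiv1$) and $\mathbf{I}$ the identity kernel ($1$ on the diagonal, $0$ elsewhere). For kernels with Gram matrices $\mathbf{K},\mathbf{\Lambda}$, $\mathbb{H}^{\mathbf{K}\otimes\mathbf{\Lambda}}[X,Y]$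 is the GAIT entropy of the joint law of $(X,Y)$ with respect to the product kernel $\kappa(x,x')\lambda(y,y')$, and the conditional entropy is $\mathbb{H}^{\mathbf{K},\mathbf{\Lambda}}[X\mid Y]=\mathbb{H}^{\mathbf{K}\otimes\mathbf{\Lambda}}[X,Y]-\mathbb{H}^{\mathbf{\Lambda}}[Y]$. *)

theory Defs
  imports "HOL-Probability.Probability"
begin

definition similarity_kernel :: "('a::finite \<Rightarrow> 'a \<Rightarrow> real) \<Rightarrow> bool" where
  "similarity_kernel k \<longleftrightarrow>
     (\<forall>x y. k x y = k y x) \<and> (\<forall>x y. 0 \<le> k x y \<and> k x y \<le> 1) \<and> (\<forall>x. k x x = 1)"

definition kernel_apply :: "('a::finite \<Rightarrow> 'a \<Rightarrow> real) \<Rightarrow> 'a pmf \<Rightarrow> 'a \<Rightarrow> real" where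
  "kernel_apply k P x = (\<Sum>y\<in>UNIV. k x y * pmf P y)"

definition gait_entropy :: "('a::finite \<Rightarrow> 'a \<Rightarrow> real) \<Rightarrow> 'a pmf \<Rightarrow> real" where
  "gait_entropy k P = - (\<Sum>x\<in>UNIV. if pmf P x = 0 then 0 else pmf P x * ln (kernel_apply k P x))"

definition prod_kernel :: "('a \<Rightarrow> 'a \<Rightarrow> real) \<Rightarrow> ('b \<Rightarrow> 'b \<Rightarrow> real) \<Rightarrow> ('a \<times> 'b) \<Rightarrow> ('a \<times> 'b) \<Rightarrow> real" where
  "prod_kernel k l p q = k (fst p) (fst q) * l (snd p) (snd q)"

definition ones_kernel :: "'a \<Rightarrow> 'a \<Rightarrow> real" where
  "ones_kernel x y = 1"

definition id_kernel :: "'a \<Rightarrow> 'a \<Rightarrow> real" where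
  "id_kernel x y = (if x = y then 1 else 0)"

definition cond_gait_entropy ::
  "('a::finite \<Rightarrow> 'a \<Rightarrow> real) \<Rightarrow> ('b::finite \<Rightarrow> 'b \<Rightarrow> real) \<Rightarrow> ('a \<times> 'b) pmf \<Rightarrow> real" where
  "cond_gait_entropy k l P = gait_entropy (prod_kernel k l) P - gait_entropy l (map_pmf snd P)"

end

theory Submission
  imports Defs
begin

text \<open>The equality for \<open>K \<otimes> J\<close> is marginalisation: \<open>(K \<otimes> J)P\<close> at \<open>(x, y)\<close> does not
  depend on \<open>y\<close> and equals \<open>K\<close> applied to the first marginal. The inequalities come from
  \<open>I \<le> \<Lambda> \<le> J\<close> pointwise: a larger kernel gives larger values of \<open>KP\<close>, hence a smaller
  entropy, and \<open>KP \<ge> P > 0\<close> on the support keeps the logarithms finite.\<close>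

lemma gait_entropy_eq_sum:
  "gait_entropy k P = - (\<Sum>x\<in>UNIV. pmf P x * ln (kernel_apply k P x))"
  unfolding gait_entropy_def by (intro arg_cong[where f=uminus] sum.cong) auto

lemma pmf_le_kernel_apply:
  assumes "\<And>a b. 0 \<le> k a b" "\<And>a. k a a = 1"
  shows "pmf P x \<le> kernel_apply k P x"
proof -
  have "pmf P x = k x x * pmf P x" using assms by simp
  also have "\<dots> \<le> (\<Sum>y\<in>UNIV. k x y * pmf P y)"
    by (rule member_le_sum) (auto intro: mult_nonneg_nonneg assms)
  finally show ?thesis unfolding kernel_apply_def .
qed

lemma kernel_apply_mono:
  assumes "\<And>a b. k1 a b \<le> k2 a b"
  shows "kernel_apply k1 P x \<le> kernel_apply k2 P x"
  unfolding kernel_apply_def by (intro sum_mono mult_right_mono assms) auto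

lemma gait_entropy_antimono:
  assumes "\<And>a b. 0 \<le> k1 a b" "\<And>a. k1 a a = 1" "\<And>a b. k1 a b \<le> k2 a b"
  shows "gait_entropy k2 P \<le> gait_entropy k1 P"
proof -
  have "pmf P x * ln (kernel_apply k1 P x) \<le> pmf P x * ln (kernel_apply k2 P x)" for x
  proof (cases "pmf P x = 0")
    case False
    then have p: "pmf P x > 0" using pmf_nonneg[of P x] by linarith
    have "kernel_apply k1 P x > 0"
      using p pmf_le_kernel_apply[of k1 P x, OF assms(1,2)] by linarith
    then have "ln (kernel_apply k1 P x) \<le> ln (kernel_apply k2 P x)"
      using kernel_apply_mono[of k1 k2 P x, OF assms(3)] by simp
    then show ?thesis using p by (simp add: mult_left_mono)
  qed simp
  then show ?thesis unfolding gait_entropy_eq_sum by (simp add: sum_mono)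
qed

lemma pmf_map_fst_eq_sum:
  "pmf (map_pmf fst (P :: ('a \<times> 'b::finite) pmf)) x = (\<Sum>y\<in>UNIV. pmf P (x, y))"
proof -
  have "pmf (map_pmf fst P) x = measure (measure_pmf P) (fst -` {x})" by (simp add: pmf_map)
  also have "fst -` {x} = Pair x ` UNIV" by auto
  also have "measure (measure_pmf P) (Pair x ` UNIV) = sum (pmf P) (Pair x ` UNIV)"
    by (rule measure_measure_pmf_finite) simp
  also have "\<dots> = (\<Sum>y\<in>UNIV. pmf P (x, y))" by (subst sum.reindex) (auto simp: inj_on_def)
  finally show ?thesis .
qed

lemma sum_UNIV_prod:
  fixes f :: "'a::finite \<times> 'b::finite \<Rightarrow> real"
  shows "(\<Sum>p\<in>UNIV. f p) = (\<Sum>a\<in>UNIV. \<Sum>b\<in>UNIV. f (a, b))"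
  by (subst UNIV_Times_UNIV[symmetric], subst sum.cartesian_product) simp

lemma kernel_apply_prod_ones_kernel:
  "kernel_apply (prod_kernel k ones_kernel) P (x, y) = kernel_apply k (map_pmf fst P) x"
proof -
  have "kernel_apply (prod_kernel k ones_kernel) P (x, y)
      = (\<Sum>a\<in>UNIV. \<Sum>b\<in>UNIV. k x a * pmf P (a, b))"
    unfolding kernel_apply_def prod_kernel_def ones_kernel_def by (simp add: sum_UNIV_prod)
  then show ?thesis
    unfolding kernel_apply_def pmf_map_fst_eq_sum by (simp add: sum_distrib_left)
qed

lemma gait_entropy_prod_ones_kernel:
  "gait_entropy (prod_kernel k ones_kernel) P = gait_entropy k (map_pmf fst P)"
proof -
  have "(\<Sum>p\<in>UNIV. pmf P p * ln (kernel_apply (prod_kernel k ones_kernel) P p))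
      = (\<Sum>a\<in>UNIV. \<Sum>b\<in>UNIV. pmf P (a, b) * ln (kernel_apply k (map_pmf fst P) a))"
    by (simp add: sum_UNIV_prod kernel_apply_prod_ones_kernel)
  also have "\<dots> = (\<Sum>a\<in>UNIV. pmf (map_pmf fst P) a * ln (kernel_apply k (map_pmf fst P) a))"
    unfolding pmf_map_fst_eq_sum by (simp add: sum_distrib_right)
  finally show ?thesis unfolding gait_entropy_eq_sum by simp
qed

lemma gait_entropy_prod_kernel_antimono:
  assumes "\<And>a b. 0 \<le> k a b" "\<And>a. k a a = 1"
    and "\<And>a b. 0 \<le> l1 a b" "\<And>a. l1 a a = 1" "\<And>a b. l1 a b \<le> l2 a b"
  shows "gait_entropy (prod_kernel k l2) P \<le> gait_entropy (prod_kernel k l1) P"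
  by (rule gait_entropy_antimono) (auto simp: prod_kernel_def assms intro: mult_left_mono)

theorem theorem7:
  fixes k :: "'x::finite \<Rightarrow> 'x \<Rightarrow> real"
    and l :: "'y::finite \<Rightarrow> 'y \<Rightarrow> real"
    and P :: "('x \<times> 'y) pmf"
  assumes "similarity_kernel k" and "similarity_kernel l"
  shows "gait_entropy k (map_pmf fst P) = gait_entropy (prod_kernel k ones_kernel) P
       \<and> gait_entropy (prod_kernel k ones_kernel) P \<le> gait_entropy (prod_kernel k l) P
       \<and> gait_entropy (prod_kernel k l) P \<le> gait_entropy (prod_kernel k id_kernel) P
       \<and> gait_entropy (prod_kernel k id_kernel) P
           = gait_entropy id_kernel (map_pmf snd P) + cond_gait_entropy k id_kernel P"
proof (intro conjI)
  have k: "\<And>a b. 0 \<le> k a b" "\<And>a. k a a = 1"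
    using assms(1) unfolding similarity_kernel_def by auto
  have l: "\<And>a b. 0 \<le> l a b" "\<And>a. l a a = 1" "\<And>a b. l a b \<le> 1"
    using assms(2) unfolding similarity_kernel_def by auto
  show "gait_entropy k (map_pmf fst P) = gait_entropy (prod_kernel k ones_kernel) P"
    by (rule gait_entropy_prod_ones_kernel[symmetric])
  show "gait_entropy (prod_kernel k ones_kernel) P \<le> gait_entropy (prod_kernel k l) P"
    by (rule gait_entropy_prod_kernel_antimono) (use k l in \<open>auto simp: ones_kernel_def\<close>)
  show "gait_entropy (prod_kernel k l) P \<le> gait_entropy (prod_kernel k id_kernel) P"
    by (rule gait_entropy_prod_kernel_antimono) (use k l in \<open>auto simp: id_kernel_def\<close>)
  show "gait_entropy (prod_kernel k id_kernel) P
      = gait_entropy id_kernel (map_pmf snd P) + cond_gait_entropy k id_kernel P"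
    by (simp add: cond_gait_entropy_def)
qed

end
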